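(* Let $G$ be a first-countable Hausdorff compact topological monoid with neutral element $e$, and let $f:G\to G$ be a closed mapping such that for each $x,y\in G$ and each neighbourhood $V$ of $e$ there exist $z\in G$ and $n\in\mathbb{N}$ with $f^n(x),f^n(y)\in zV$. Then $f$ has a unique fixed point.
   Context: A topological monoid is a semigroup with neutral element, equipped with a topology making multiplication jointly continuous. A mapping is closed if it maps closed sets to closed sets (continuity is not assumed). $zV=\{zv:v\in V\}$; $f^n$ is the $n$-fold iterate of $f$. *)

theory Defs
  imports "HOL-Analysis.Analysis"
begin

definition closed_map_on_type :: "('a::topological_space \<Rightarrow> 'b::topological_space) \<Rightarrow> bool" where
  "closed_map_on_type f \<longleftrightarrow> (\<forall>S. closed S \<longrightarrow> closed (f ` S))"

definition nhd_of :: "'a::topological_space set \<Rightarrow> 'a \<Rightarrow> bool" where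
  "nhd_of V e \<longleftrightarrow> (\<exists>U. open U \<and> e \<in> U \<and> U \<subseteq> V)"

end

theory Submission
  imports Defs
begin

text \<open>Fix a countable neighbourhood basis \<open>A m\<close> of \<open>1\<close> such that any choice \<open>u m \<in> A m\<close>
  tends to \<open>1\<close>. Proximality of \<open>x\<close> and \<open>y\<close> at each \<open>A m\<close> gives \<open>f\<^sup>n x = z v\<close>, \<open>f\<^sup>n y = z w\<close> with
  \<open>v, w \<in> A m\<close>; by sequential compactness \<open>z\<close> converges along a subsequence, and by continuity
  of multiplication both translates then converge to the same limit. For two fixed points this
  forces equality. For the pair \<open>f\<^sup>m x, f\<^bsup>m+1\<^esup> x\<close> it gives exponents \<open>e\<^sub>k \<ge> k\<close> with
  \<open>f\<^bsup>e\<^sub>k\<^esup> x \<longrightarrow> c\<close> and \<open>f\<^bsup>e\<^sub>k+1\<^esup> x \<longrightarrow> c\<close>. As \<open>f\<close> is closed, either \<open>f c = c\<close> or \<open>f\<^bsup>e\<^sub>k+1\<^esup> x = c\<close>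
  infinitely often, which makes \<open>c\<close> periodic. The orbit of a periodic point is finite, so the
  same limit argument run from \<open>c\<close> yields sequences that are eventually constant, equal to a
  fixed point.\<close>

lemma translates_common_limit:
  fixes z v w :: "nat \<Rightarrow> 'a::{monoid_mult, first_countable_topology}"
  assumes cpt: "compact (UNIV :: 'a set)"
    and mult_cont: "continuous_on UNIV (\<lambda>p :: 'a \<times> 'a. fst p * snd p)"
    and "v \<longlonglongrightarrow> 1" and "w \<longlonglongrightarrow> 1"
  shows "\<exists>r c. strict_mono r \<and> (\<lambda>k. z (r k) * v (r k)) \<longlonglongrightarrow> c \<and> (\<lambda>k. z (r k) * w (r k)) \<longlonglongrightarrow> c"
proof -
  obtain r c where r: "strict_mono r" and zc: "(z \<circ> r) \<longlonglongrightarrow> c"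
    using compact_imp_seq_compact[OF cpt] unfolding seq_compact_def by blast
  have "(\<lambda>k. z (r k) * u (r k)) \<longlonglongrightarrow> c" if "u \<longlonglongrightarrow> 1" for u
  proof -
    have "(\<lambda>k. (z (r k), u (r k))) \<longlonglongrightarrow> (c, 1)"
      using tendsto_Pair[OF zc LIMSEQ_subseq_LIMSEQ[OF that r]] by (simp add: o_def)
    from continuous_on_tendsto_compose[OF mult_cont this] show ?thesis
      by (simp add: o_def)
  qed
  with r assms(3,4) show ?thesis by blast
qed

lemma closed_map_limit_fixed_or_frequent:
  fixes f :: "'a::t2_space \<Rightarrow> 'a"
  assumes closed_f: "closed_map_on_type f" and s: "s \<longlonglongrightarrow> c" and fs: "(\<lambda>k. f (s k)) \<longlonglongrightarrow> c"
  shows "f c = c \<or> (\<exists>\<^sub>F k in sequentially. f (s k) = c)"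
proof -
  have "f c = c \<or> (\<exists>k\<ge>M. f (s k) = c)" for M
  proof -
    have "compactin euclidean (insert c (s ` {M..}))"
      using s by (intro compactin_sequence_with_limit) auto
    then have "closed (insert c (s ` {M..}))"
      by (simp add: compact_imp_closed)
    then have "closed (f ` insert c (s ` {M..}))"
      using closed_f unfolding closed_map_on_type_def by blast
    moreover have "eventually (\<lambda>k. f (s k) \<in> f ` insert c (s ` {M..})) sequentially"
      unfolding eventually_sequentially by auto
    ultimately have "c \<in> f ` insert c (s ` {M..})"
      by (rule Lim_in_closed_set[OF _ _ trivial_limit_sequentially fs])
    then show ?thesis by auto
  qed
  then show ?thesis unfolding frequently_sequentially by blast
qed

lemma funpow_eq_imp_periodic:
  assumes "(f ^^ a) x = c" and "(f ^^ b) x = c" and "a \<le> b"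
  shows "(f ^^ (b - a)) c = c"
  using assms by (metis funpow_add le_add_diff_inverse2 o_apply)

lemma periodic_imp_finite_orbit:
  assumes "(f ^^ p) c = c" and "0 < p"
  shows "finite (range (\<lambda>n. (f ^^ n) c))"
proof (rule finite_subset)
  show "range (\<lambda>n. (f ^^ n) c) \<subseteq> (\<lambda>n. (f ^^ n) c) ` {..<p}"
  proof
    fix y assume "y \<in> range (\<lambda>n. (f ^^ n) c)"
    then obtain n where "y = (f ^^ (n mod p)) c"
      by (auto simp: funpow_mod_eq[OF assms(1)])
    moreover have "n mod p < p"
      using assms(2) by simp
    ultimately show "y \<in> (\<lambda>n. (f ^^ n) c) ` {..<p}" by blast
  qed
qed simp

lemma tendsto_finite_range_eventually_eq:
  fixes s :: "nat \<Rightarrow> 'a::t1_space"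
  assumes "finite (range s)" and "s \<longlonglongrightarrow> l"
  shows "eventually (\<lambda>k. s k = l) sequentially"
proof -
  have "closed (range s - {l})"
    using assms(1) by (simp add: finite_imp_closed)
  then have "eventually (\<lambda>k. s k \<in> - (range s - {l})) sequentially"
    using assms(2) by (intro topological_tendstoD open_Compl) auto
  then show ?thesis
    by (rule eventually_mono) blast
qed

locale proximal_map =
  fixes f :: "'a::{monoid_mult, t2_space, first_countable_topology} \<Rightarrow> 'a"
    and A :: "nat \<Rightarrow> 'a set"
  assumes compact_UNIV: "compact (UNIV :: 'a set)"
    and mult_cont: "continuous_on UNIV (\<lambda>p :: 'a \<times> 'a. fst p * snd p)"
    and basis: "\<And>u. \<forall>m. u m \<in> A m \<Longrightarrow> u \<longlonglongrightarrow> 1"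
    and prox: "\<And>x y m. \<exists>z n. (f ^^ n) x \<in> (\<lambda>v. z * v) ` A m \<and> (f ^^ n) y \<in> (\<lambda>v. z * v) ` A m"
begin

lemma translates_in_basis_common_limit:
  assumes "\<And>m. v m \<in> A m" and "\<And>m. w m \<in> A m"
  shows "\<exists>r c. strict_mono r \<and> (\<lambda>k. z (r k) * v (r k)) \<longlonglongrightarrow> c \<and> (\<lambda>k. z (r k) * w (r k)) \<longlonglongrightarrow> c"
  using assms by (intro translates_common_limit compact_UNIV mult_cont basis) auto

lemma orbit_asymptotically_invariant_limit:
  "\<exists>e c. (\<forall>k. k \<le> e k) \<and> (\<lambda>k. (f ^^ e k) x) \<longlonglongrightarrow> c \<and> (\<lambda>k. (f ^^ Suc (e k)) x) \<longlonglongrightarrow> c"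
proof -
  have "\<exists>z n v w. v \<in> A m \<and> w \<in> A m \<and> (f ^^ (n + m)) x = z * v \<and> (f ^^ Suc (n + m)) x = z * w"
    for m
  proof -
    obtain z n where "(f ^^ n) ((f ^^ m) x) \<in> (\<lambda>v. z * v) ` A m"
      and "(f ^^ n) ((f ^^ Suc m) x) \<in> (\<lambda>v. z * v) ` A m"
      using prox by blast
    moreover have "(f ^^ n) ((f ^^ m) x) = (f ^^ (n + m)) x"
      and "(f ^^ n) ((f ^^ Suc m) x) = (f ^^ Suc (n + m)) x"
      by (metis funpow_add o_apply add_Suc_right)+
    ultimately show ?thesis by auto
  qed
  then obtain z n v w where "\<And>m. v m \<in> A m" and "\<And>m. w m \<in> A m"
    and orbit: "\<And>m. (f ^^ (n m + m)) x = z m * v m \<and> (f ^^ Suc (n m + m)) x = z m * w m"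
    by metis
  then obtain r c where "strict_mono r" and "(\<lambda>k. z (r k) * v (r k)) \<longlonglongrightarrow> c"
    and "(\<lambda>k. z (r k) * w (r k)) \<longlonglongrightarrow> c"
    using translates_in_basis_common_limit by blast
  moreover from \<open>strict_mono r\<close> have "k \<le> n (r k) + r k" for k
    using seq_suble trans_le_add2 by blast
  ultimately show ?thesis
    by (intro exI[of _ "\<lambda>k. n (r k) + r k"] exI[of _ c]) (simp add: orbit del: funpow.simps)
qed

lemma periodic_point_imp_fixed_point:
  assumes periodic: "(f ^^ p) c = c" and "0 < p"
  shows "\<exists>x. f x = x"
proof -
  obtain e x where lim: "(\<lambda>k. (f ^^ e k) c) \<longlonglongrightarrow> x" and lim_Suc: "(\<lambda>k. (f ^^ Suc (e k)) c) \<longlonglongrightarrow> x"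
    using orbit_asymptotically_invariant_limit by blast
  have "finite (range (\<lambda>k. (f ^^ g k) c))" for g :: "nat \<Rightarrow> nat"
    using periodic_imp_finite_orbit[OF periodic \<open>0 < p\<close>] by (rule finite_subset[rotated]) auto
  then have "eventually (\<lambda>k. (f ^^ e k) c = x \<and> (f ^^ Suc (e k)) c = x) sequentially"
    using lim lim_Suc by (intro eventually_conj tendsto_finite_range_eventually_eq)
  then obtain k where "(f ^^ e k) c = x" and "(f ^^ Suc (e k)) c = x"
    unfolding eventually_sequentially by blast
  then show ?thesis by auto
qed

lemma fixed_point_exists:
  assumes "closed_map_on_type f"
  shows "\<exists>x. f x = x"
proof -
  obtain e c where e: "\<forall>k. k \<le> e k" and lim: "(\<lambda>k. (f ^^ e k) 1) \<longlonglongrightarrow> c"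
    and lim_Suc: "(\<lambda>k. f ((f ^^ e k) 1)) \<longlonglongrightarrow> c"
    using orbit_asymptotically_invariant_limit[of 1] by auto
  consider "f c = c" | "\<exists>\<^sub>F k in sequentially. (f ^^ Suc (e k)) 1 = c"
    using closed_map_limit_fixed_or_frequent[OF assms lim lim_Suc] by auto
  then show ?thesis
  proof cases
    case 2
    then obtain k0 k1 where hit0: "(f ^^ Suc (e k0)) 1 = c" and hit1: "(f ^^ Suc (e k1)) 1 = c"
      and "k1 > e k0"
      unfolding frequently_sequentially by (metis le_refl less_eq_Suc_le)
    then have "e k0 < e k1"
      using e order.strict_trans2 by blast
    then have "(f ^^ (Suc (e k1) - Suc (e k0))) c = c" and "0 < Suc (e k1) - Suc (e k0)"
      using funpow_eq_imp_periodic[OF hit0 hit1] by simp_all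
    then show ?thesis by (rule periodic_point_imp_fixed_point)
  qed blast
qed

lemma fixed_point_unique:
  assumes "f a = a" and "f b = b"
  shows "a = b"
proof -
  have "(f ^^ n) a = a" and "(f ^^ n) b = b" for n
    by (induction n) (simp_all add: assms)
  then have "\<exists>z v w. v \<in> A m \<and> w \<in> A m \<and> a = z * v \<and> b = z * w" for m
    using prox[where x=a and y=b and m=m] by auto
  then obtain z v w where "\<And>m. v m \<in> A m" "\<And>m. w m \<in> A m"
    and "\<And>m. a = z m * v m" "\<And>m. b = z m * w m"
    by metis
  then obtain c where "(\<lambda>k. a) \<longlonglongrightarrow> c" and "(\<lambda>k. b) \<longlonglongrightarrow> c"
    using translates_in_basis_common_limit[of v w z] by auto
  then show "a = b" by (simp add: LIMSEQ_const_iff)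
qed

end

theorem theorem15:
  fixes f :: "'a::{monoid_mult, t2_space, first_countable_topology} \<Rightarrow> 'a"
  assumes cpt: "compact (UNIV :: 'a set)"
    and mult_cont: "continuous_on UNIV (\<lambda>p :: 'a \<times> 'a. fst p * snd p)"
    and closed_f: "closed_map_on_type f"
    and prox: "\<And>x y V. nhd_of V (1::'a) \<Longrightarrow>
                 \<exists>z n. n \<ge> 1 \<and> (f ^^ n) x \<in> (\<lambda>v. z * v) ` V \<and> (f ^^ n) y \<in> (\<lambda>v. z * v) ` V"
  shows "\<exists>!x. f x = x"
proof -
  obtain A :: "nat \<Rightarrow> 'a set" where "\<And>m. open (A m)" and "\<And>m. 1 \<in> A m"
    and basis: "\<And>u. \<forall>m. u m \<in> A m \<Longrightarrow> u \<longlonglongrightarrow> 1"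
    by (rule first_countable_topology_class.countable_basis) blast
  then have "nhd_of (A m) 1" for m
    unfolding nhd_of_def by blast
  then interpret proximal_map f A
    using cpt mult_cont basis prox by unfold_locales blast+
  show ?thesis
    using fixed_point_exists[OF closed_f] fixed_point_unique by blast
qed

end
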